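(* Let $n$ be a positive integer, let $A(n)=(a_{ij})_{i,j\in\mathbb{N}}$ be the greedy matrix described in the context, and let $k,r\geq 1$. Let $\overline{A}=A^{kr}$ be the partial matrix described in the context, and let $x$ be the number of ones in the $k$-th row of $\overline{A}$. Then the number of integers $l\geq 1$ such that the cell $(k,l)$ is a galf of $\overline{A}$ is at most $x n^2$.
   Context: $\mathbb{N}=\{1,2,3,\dots\}$. Fix a positive integer $n$. The infinite $\{0,1\}$-matrix $A(n)=(a_{ij})_{i,j\in\mathbb{N}}$ (the greedy matrix) is defined recursively. Its entries are determined row by row (row $1$ first), and within each row from left to right, so that $a_{kl}$ is determined after all $a_{ij}$ with $i<k$ and all $a_{kj}$ with $j<l$. One sets $a_{kl}=1$ if and only if all of the following hold: (1) $\sum_{j<l}a_{kj}<n+1$; (2) $\sum_{i<k}a_{il}<n+1$; (3) there is no pair $(i,j)$ with $1\le i<k$, $1\le j<l$ and $a_{ij}=a_{il}=a_{kj}=1$. Otherwise $a_{kl}=0$. For $k,r\ge 1$, $A^{kr}$ denotes the $\mathbb{N}\times\mathbb{N}$ matrix that agrees with $A(n)$ in all entries of rows $1,\dots,k-1$ and in the entries $(k,1),\dots,(k,r-1)$, and is $0$ in all other entries (the matrix constructed so far just before $a_{kr}$ is determined). For a $\{0,1\}$-matrix $M=(m_{ij})$, a cell $(i,j)$ is a flag if $m_{ij}=1$, and it is a galf of $M$ if there exists a flag $(k',l')$ of $M$ with $k'\neq i$, $l'\neq j$ and $m_{k'l'}=m_{k'j}=m_{il'}=1$. *)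

theory Defs
  imports Main
begin

text \<open>Matrices are represented as nat => nat => bool (True = entry 1).
  Only indices >= 1 are meaningful; entries with index 0 are always False.\<close>

text \<open>Rule for a_kl, given the completed rows 1..k-1 (M) and the entries R j of
  row k for j < l.\<close>
definition greedy_cond :: "nat \<Rightarrow> (nat \<Rightarrow> nat \<Rightarrow> bool) \<Rightarrow> nat \<Rightarrow> (nat \<Rightarrow> bool) \<Rightarrow> nat \<Rightarrow> bool" where
  "greedy_cond n M k R l \<longleftrightarrow>
     card {j. 1 \<le> j \<and> j < l \<and> R j} < n + 1 \<and>
     card {i. 1 \<le> i \<and> i < k \<and> M i l} < n + 1 \<and>
     \<not> (\<exists>i j. 1 \<le> i \<and> i < k \<and> 1 \<le> j \<and> j < l \<and> M i j \<and> M i l \<and> R j)"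

primrec greedy_row_prefix :: "nat \<Rightarrow> (nat \<Rightarrow> nat \<Rightarrow> bool) \<Rightarrow> nat \<Rightarrow> nat \<Rightarrow> nat \<Rightarrow> bool" where
  "greedy_row_prefix n M k 0 = (\<lambda>_. False)"
| "greedy_row_prefix n M k (Suc l) =
     (let R = greedy_row_prefix n M k l
      in R(l := (1 \<le> l \<and> greedy_cond n M k R l)))"

primrec greedy_rows :: "nat \<Rightarrow> nat \<Rightarrow> nat \<Rightarrow> nat \<Rightarrow> bool" where
  "greedy_rows n 0 = (\<lambda>_ _. False)"
| "greedy_rows n (Suc k) =
     (let M = greedy_rows n k
      in M(Suc k := (\<lambda>l. greedy_row_prefix n M (Suc k) (Suc l) l)))"

definition greedy_matrix :: "nat \<Rightarrow> nat \<Rightarrow> nat \<Rightarrow> bool" where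
  "greedy_matrix n i j = greedy_rows n i i j"

definition partial_matrix :: "nat \<Rightarrow> nat \<Rightarrow> nat \<Rightarrow> nat \<Rightarrow> nat \<Rightarrow> bool" where
  "partial_matrix n k r i j =
     (if i < k \<or> (i = k \<and> j < r) then greedy_matrix n i j else False)"

definition is_flag :: "(nat \<Rightarrow> nat \<Rightarrow> bool) \<Rightarrow> nat \<Rightarrow> nat \<Rightarrow> bool" where
  "is_flag M i j \<longleftrightarrow> M i j"

definition is_galf :: "(nat \<Rightarrow> nat \<Rightarrow> bool) \<Rightarrow> nat \<Rightarrow> nat \<Rightarrow> bool" where
  "is_galf M i j \<longleftrightarrow>
     (\<exists>k' l'. is_flag M k' l' \<and> k' \<noteq> i \<and> l' \<noteq> j \<and> M k' j \<and> M i l')"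

end

theory Submission
  imports Defs
begin

text \<open>A galf \<open>(k, l)\<close> of \<open>A\<^sup>k\<^sup>r\<close> is witnessed by a flag \<open>(k, l')\<close> of row \<open>k\<close> and a flag
  \<open>(k', l')\<close> with \<open>k' < k\<close> for which \<open>(k', l)\<close> is a flag as well. The flag \<open>(k, l')\<close> was
  placed by the greedy rule, so column \<open>l'\<close> has at most \<open>n\<close> ones above row \<open>k\<close>; every
  row has at most \<open>n + 1\<close> ones, one of which is \<open>l'\<close>. Hence each of the \<open>x\<close> flags of row
  \<open>k\<close> accounts for at most \<open>n \<cdot> n\<close> galfs.\<close>

lemma greedy_rows_Suc_apply:
  "greedy_rows n (Suc k) i =
     (if i = Suc k then (\<lambda>l. greedy_row_prefix n (greedy_rows n k) (Suc k) (Suc l) l)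
      else greedy_rows n k i)"
  by (simp only: greedy_rows.simps Let_def fun_upd_apply)

lemma greedy_row_prefix_Suc_apply:
  "greedy_row_prefix n M k (Suc l) j =
     (if j = l then 1 \<le> l \<and> greedy_cond n M k (greedy_row_prefix n M k l) l
      else greedy_row_prefix n M k l j)"
  by (simp only: greedy_row_prefix.simps Let_def fun_upd_apply)

declare greedy_rows.simps(2) [simp del] greedy_row_prefix.simps(2) [simp del]

lemma greedy_rows_stable: "i \<le> k \<Longrightarrow> greedy_rows n k i = greedy_rows n i i"
  by (induction k) (auto simp: greedy_rows_Suc_apply le_Suc_eq)

lemma greedy_row_prefix_stable:
  "greedy_row_prefix n M k L j \<longleftrightarrow> j < L \<and> greedy_row_prefix n M k (Suc j) j"
  by (induction L) (auto simp: greedy_row_prefix_Suc_apply)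

lemma greedy_matrix_eq_greedy_rows: "i \<le> m \<Longrightarrow> greedy_rows n m i l = greedy_matrix n i l"
  unfolding greedy_matrix_def by (subst greedy_rows_stable) auto

text \<open>Not a simp rule: the right-hand side mentions the same row again.\<close>

lemma greedy_matrix_Suc:
  "greedy_matrix n (Suc m) j \<longleftrightarrow>
     1 \<le> j \<and> greedy_cond n (greedy_rows n m) (Suc m) (\<lambda>t. t < j \<and> greedy_matrix n (Suc m) t) j"
proof -
  have prefix: "greedy_row_prefix n (greedy_rows n m) (Suc m) j =
                  (\<lambda>t. t < j \<and> greedy_matrix n (Suc m) t)"
    by (rule ext, subst greedy_row_prefix_stable) (simp add: greedy_matrix_def greedy_rows_Suc_apply)
  have "greedy_matrix n (Suc m) j = greedy_row_prefix n (greedy_rows n m) (Suc m) (Suc j) j"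
    by (simp add: greedy_matrix_def greedy_rows_Suc_apply)
  then show ?thesis
    by (simp add: greedy_row_prefix_Suc_apply prefix)
qed

lemma greedy_matrix_0_row: "\<not> greedy_matrix n 0 j"
  by (simp add: greedy_matrix_def)

lemma greedy_matrix_col_pos: "greedy_matrix n i j \<Longrightarrow> 1 \<le> j"
  by (cases i) (auto simp: greedy_matrix_0_row dest: greedy_matrix_Suc[THEN iffD1])

lemma greedy_matrix_row_pos: "greedy_matrix n i j \<Longrightarrow> 1 \<le> i"
  by (cases i) (auto simp: greedy_matrix_0_row)

definition ones_in_row :: "nat \<Rightarrow> nat \<Rightarrow> nat set" where
  "ones_in_row n i = {j. 1 \<le> j \<and> greedy_matrix n i j}"

definition ones_above :: "nat \<Rightarrow> nat \<Rightarrow> nat \<Rightarrow> nat set" where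
  "ones_above n k j = {i. 1 \<le> i \<and> i < k \<and> greedy_matrix n i j}"

lemma card_ones_in_row_before_le:
  assumes "greedy_matrix n i j"
  shows "card {t \<in> ones_in_row n i. t < j} \<le> n"
proof (cases i)
  case 0
  with assms show ?thesis by (simp add: greedy_matrix_0_row)
next
  case (Suc m)
  with assms have "greedy_cond n (greedy_rows n m) i (\<lambda>t. t < j \<and> greedy_matrix n i t) j"
    using greedy_matrix_Suc by blast
  then have "card {t. 1 \<le> t \<and> t < j \<and> greedy_matrix n i t} < n + 1"
    by (simp add: greedy_cond_def)
  then show ?thesis
    by (simp add: ones_in_row_def conj_commute conj_left_commute)
qed

lemma card_ones_above_le:
  assumes "greedy_matrix n k j"
  shows "card (ones_above n k j) \<le> n"
proof (cases k)
  case 0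
  with assms show ?thesis by (simp add: greedy_matrix_0_row)
next
  case (Suc m)
  with assms have "greedy_cond n (greedy_rows n m) k (\<lambda>t. t < j \<and> greedy_matrix n k t) j"
    using greedy_matrix_Suc by blast
  then have "card {i. 1 \<le> i \<and> i < k \<and> greedy_rows n m i j} < n + 1"
    by (simp add: greedy_cond_def)
  moreover have "{i. 1 \<le> i \<and> i < k \<and> greedy_rows n m i j} = ones_above n k j"
    using Suc by (auto simp: ones_above_def greedy_matrix_eq_greedy_rows)
  ultimately show ?thesis by simp
qed

lemma card_ones_in_row_below_le: "card {t \<in> ones_in_row n i. t < L} \<le> n + 1"
proof (induction L)
  case (Suc L)
  show ?case
  proof (cases "L \<in> ones_in_row n i")
    case True
    then have "{t \<in> ones_in_row n i. t < Suc L} = insert L {t \<in> ones_in_row n i. t < L}"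
      by auto
    moreover have "card {t \<in> ones_in_row n i. t < L} \<le> n"
      using True card_ones_in_row_before_le by (simp add: ones_in_row_def)
    ultimately show ?thesis by simp
  next
    case False
    then have "{t \<in> ones_in_row n i. t < Suc L} = {t \<in> ones_in_row n i. t < L}"
      by (auto simp: less_Suc_eq)
    with Suc.IH show ?thesis by simp
  qed
qed simp

lemma finite_card_le_of_initial_segments:
  fixes S :: "nat set"
  assumes "\<And>L. card {t \<in> S. t < L} \<le> c"
  shows "finite S \<and> card S \<le> c"
proof -
  have finite_subsets: "card B \<le> c" if "B \<subseteq> S" "finite B" for B
  proof -
    have "B \<subseteq> {t \<in> S. t < Suc (Max B)}"
      using that by (auto simp: le_imp_less_Suc)
    then have "card B \<le> card {t \<in> S. t < Suc (Max B)}"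
      by (intro card_mono) auto
    then show ?thesis using assms[of "Suc (Max B)"] by linarith
  qed
  have "finite S"
  proof (rule ccontr)
    assume "infinite S"
    then obtain B where "B \<subseteq> S" "finite B" "card B = Suc c"
      using infinite_arbitrarily_large by blast
    with finite_subsets[of B] show False by simp
  qed
  with finite_subsets show ?thesis by blast
qed

lemma ones_in_row_finite_card_le: "finite (ones_in_row n i) \<and> card (ones_in_row n i) \<le> n + 1"
  by (rule finite_card_le_of_initial_segments) (rule card_ones_in_row_below_le)

lemma card_UN_le_mult:
  assumes "finite A" "\<And>a. a \<in> A \<Longrightarrow> card (F a) \<le> c"
  shows "card (\<Union>a\<in>A. F a) \<le> card A * c"
proof -
  have "card (\<Union>a\<in>A. F a) \<le> (\<Sum>a\<in>A. card (F a))"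
    by (rule card_UN_le[OF assms(1)])
  also have "\<dots> \<le> card A * c"
    using sum_bounded_above[of A "\<lambda>a. card (F a)" c] assms(2) by simp
  finally show ?thesis .
qed

definition galfs_via_column :: "nat \<Rightarrow> nat \<Rightarrow> nat \<Rightarrow> nat set" where
  "galfs_via_column n k l' = (\<Union>k'\<in>ones_above n k l'. (ones_in_row n k' - {l'}))"

lemma galfs_partial_matrix_row_subset:
  "{l. 1 \<le> l \<and> is_galf (partial_matrix n k r) k l} \<subseteq>
     (\<Union>l'\<in>{j. 1 \<le> j \<and> partial_matrix n k r k j}. galfs_via_column n k l')"
proof
  fix l
  assume "l \<in> {l. 1 \<le> l \<and> is_galf (partial_matrix n k r) k l}"
  then obtain k' l' where
    flags: "partial_matrix n k r k' l'" "partial_matrix n k r k' l" and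
    row_k: "partial_matrix n k r k l'" and
    ne: "k' \<noteq> k" "l' \<noteq> l" and "1 \<le> l"
    by (auto simp: is_galf_def is_flag_def)
  from flags ne have "k' < k" "greedy_matrix n k' l'" "greedy_matrix n k' l"
    by (auto simp: partial_matrix_def split: if_splits)
  then have "l \<in> galfs_via_column n k l'"
    using ne \<open>1 \<le> l\<close> greedy_matrix_row_pos
    by (auto simp: galfs_via_column_def ones_above_def ones_in_row_def)
  moreover have "l' \<in> {j. 1 \<le> j \<and> partial_matrix n k r k j}"
    using row_k greedy_matrix_col_pos by (auto simp: partial_matrix_def split: if_splits)
  ultimately show "l \<in> (\<Union>l'\<in>{j. 1 \<le> j \<and> partial_matrix n k r k j}. galfs_via_column n k l')"
    by blast
qed

lemma galfs_via_column_finite_card_le: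
  assumes "greedy_matrix n k l'"
  shows "finite (galfs_via_column n k l') \<and> card (galfs_via_column n k l') \<le> n ^ 2"
proof -
  have finite_above: "finite (ones_above n k l')"
    by (rule finite_subset[of _ "{..<k}"]) (auto simp: ones_above_def)
  have "card (ones_in_row n k' - {l'}) \<le> n" if "k' \<in> ones_above n k l'" for k'
  proof -
    have "l' \<in> ones_in_row n k'"
      using that greedy_matrix_col_pos by (auto simp: ones_above_def ones_in_row_def)
    with ones_in_row_finite_card_le[of n k'] show ?thesis by auto
  qed
  then have "card (galfs_via_column n k l') \<le> card (ones_above n k l') * n"
    unfolding galfs_via_column_def by (rule card_UN_le_mult[OF finite_above])
  also have "\<dots> \<le> n ^ 2"
    using card_ones_above_le[OF assms] by (simp add: power2_eq_square)
  finally show ?thesis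
    using finite_above ones_in_row_finite_card_le by (simp add: galfs_via_column_def)
qed

theorem lemma3p1:
  fixes n k r :: nat
  assumes "1 \<le> n" and "1 \<le> k" and "1 \<le> r"
  defines "Abar \<equiv> partial_matrix n k r"
  defines "x \<equiv> card {j. 1 \<le> j \<and> Abar k j}"
  shows "finite {l. 1 \<le> l \<and> is_galf Abar k l}
         \<and> card {l. 1 \<le> l \<and> is_galf Abar k l} \<le> x * n ^ 2"
proof -
  define X where "X = {j. 1 \<le> j \<and> Abar k j}"
  have flags_X: "greedy_matrix n k l'" if "l' \<in> X" for l'
    using that by (simp add: X_def Abar_def partial_matrix_def split: if_splits)
  have "finite X"
    by (rule finite_subset[of _ "{..<r}"]) (auto simp: X_def Abar_def partial_matrix_def)
  have covered: "{l. 1 \<le> l \<and> is_galf Abar k l} \<subseteq> (\<Union>l'\<in>X. galfs_via_column n k l')"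
    unfolding Abar_def X_def by (rule galfs_partial_matrix_row_subset)
  have "finite (\<Union>l'\<in>X. galfs_via_column n k l')"
    using \<open>finite X\<close> flags_X galfs_via_column_finite_card_le by blast
  moreover have "card (\<Union>l'\<in>X. galfs_via_column n k l') \<le> x * n ^ 2"
    unfolding x_def X_def[symmetric]
    by (rule card_UN_le_mult[OF \<open>finite X\<close>]) (use flags_X galfs_via_column_finite_card_le in blast)
  ultimately show ?thesis
    using covered by (meson card_mono finite_subset le_trans)
qed

end
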